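(* Let $\Omega>0$ denote the maximum absolute value of the stored quantities, let $C,D$ be column indices of $X\in\mathbb{R}^{K\times d}$ of the operands, and let $E$ be a target column index. Then there exists a single transformer layer that simulates the AND operation $X[1,E]\leftarrow X[1,C]\wedge X[1,D]$.
   Context: Conventions: rows/columns indexed from $1$; $X[i,j]$ is the $(i,j)$ entry. $\wedge$ is logical AND on values in $\{0,1\}$. $\phi(x)=\max\{x,0\}$ entrywise. Hardmax $\sigma$: row $i$ of $\sigma(\Phi)$ is $\frac{1}{|S_i|}\sum_{k\in S_i}e_k$, $S_i=\{k:\Phi_{ik}=\max_j\Phi_{ij}\}$. For a weighted hypergraph with incident matrix $A\in\mathbb{R}^{n_v\times n_e}$ ($A_{ij}=w(e_j)$ if vertex $v_i\in e_j$, else $0$) and $K\ge\max\{n_v,n_e\}+1$, the padded incident matrix $\widetilde A\in\mathbb{R}^{K\times K}$ has $\widetilde A_{i+1,j+1}=A_{ij}$, zeros elsewhere. A transformer layer on $X\in\mathbb{R}^{K\times d}$ is $f(X,\widetilde A)=f_{\mathrm{mlp}}(f_{\mathrm{attn}}(X,\widetilde A))$, $f_{\mathrm{attn}}(X,\widetilde A)=\sum_{i\in M_A}\psi^{(i)}(X,\widetilde A)+\sum_{i\in M_{A^\top}}\psi^{(i)}(X,\widetilde A^\top)+\sum_{i\in M}\psi^{(i)}(X,I_K)+X$, $\psi(X,B)=B\,\sigma(XW_QW_K^\top X^\top)XW_V$ ($W_Q,W_K\in\mathbb{R}^{d\times2}$, $W_V\in\mathbb{R}^{d\times d}$), $f_{\mathrm{mlp}}(X)=Z^{(4)}W^{(4)}+X$,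 $Z^{(1)}=X$, $Z^{(j+1)}=\phi(Z^{(j)}W^{(j)})$ ($j=1,2,3$). Storage convention: scalars in the top row of a column (rest $0$), arrays of length $K-1$ in rows $2,\dots,K$ (top $0$); designated columns $B_{\mathrm{global}}$ (top $1$, rest $0$), $B_{\mathrm{local}}$ (top $0$, rest $1$), and scratchpad columns. "Simulating an operation" means the layer's weights can be chosen so that applying it to $X$ performs the stated update. *)

theory Defs
  imports Complex_Main
begin

text \<open>Matrices are represented as functions nat => nat => real, indexed from 1;
  the dimensions are passed explicitly and only entries in range matter.\<close>

type_synonym mat = "nat \<Rightarrow> nat \<Rightarrow> real"

definition mmul :: "nat \<Rightarrow> mat \<Rightarrow> mat \<Rightarrow> mat" where
  "mmul n A B = (\<lambda>i j. \<Sum>k=1..n. A i k * B k j)"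

definition transp :: "mat \<Rightarrow> mat" where
  "transp A = (\<lambda>i j. A j i)"

definition idm :: mat where
  "idm = (\<lambda>i j. if i = j then 1 else 0)"

definition madd :: "mat \<Rightarrow> mat \<Rightarrow> mat" where
  "madd A B = (\<lambda>i j. A i j + B i j)"

definition relu :: "mat \<Rightarrow> mat" where
  "relu A = (\<lambda>i j. max (A i j) 0)"

definition hardmax :: "nat \<Rightarrow> mat \<Rightarrow> mat" where
  "hardmax K P = (\<lambda>i j.
     let m = Max ((P i) ` {1..K}); S = {k \<in> {1..K}. P i k = m}
     in if j \<in> S then 1 / real (card S) else 0)"

record head =
  WQ :: mat   \<comment> \<open>d x 2\<close>
  WK :: mat   \<comment> \<open>d x 2\<close>
  WV :: mat   \<comment> \<open>d x d\<close>

record layer =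
  headsA  :: "head list"
  headsAT :: "head list"
  headsI  :: "head list"
  hid1 :: nat
  hid2 :: nat
  hid3 :: nat
  W1 :: mat   \<comment> \<open>d x hid1\<close>
  W2 :: mat   \<comment> \<open>hid1 x hid2\<close>
  W3 :: mat   \<comment> \<open>hid2 x hid3\<close>
  W4 :: mat   \<comment> \<open>hid3 x d\<close>

definition psi :: "nat \<Rightarrow> nat \<Rightarrow> head \<Rightarrow> mat \<Rightarrow> mat \<Rightarrow> mat" where
  "psi K d h X B =
     mmul K B (mmul K (hardmax K (mmul 2 (mmul d X (WQ h)) (transp (mmul d X (WK h)))))
                      (mmul d X (WV h)))"

definition f_attn :: "nat \<Rightarrow> nat \<Rightarrow> layer \<Rightarrow> mat \<Rightarrow> mat \<Rightarrow> mat" where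
  "f_attn K d L X B = (\<lambda>i j.
      sum_list (map (\<lambda>h. psi K d h X B i j) (headsA L))
    + sum_list (map (\<lambda>h. psi K d h X (transp B) i j) (headsAT L))
    + sum_list (map (\<lambda>h. psi K d h X idm i j) (headsI L))
    + X i j)"

definition f_mlp :: "nat \<Rightarrow> layer \<Rightarrow> mat \<Rightarrow> mat" where
  "f_mlp d L X =
     (let Z2 = relu (mmul d X (W1 L));
          Z3 = relu (mmul (hid1 L) Z2 (W2 L));
          Z4 = relu (mmul (hid2 L) Z3 (W3 L))
      in madd (mmul (hid3 L) Z4 (W4 L)) X)"

definition apply_layer :: "nat \<Rightarrow> nat \<Rightarrow> layer \<Rightarrow> mat \<Rightarrow> mat \<Rightarrow> mat" where
  "apply_layer K d L X B = f_mlp d L (f_attn K d L X B)"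

text \<open>Padded incident matrix of a weighted hypergraph with vertices 1..nv, hyperedges 1..ne,
  incidence relation inc (vertex i in edge j) and edge weights w.\<close>
definition padded_incident :: "nat \<Rightarrow> nat \<Rightarrow> (nat \<Rightarrow> nat \<Rightarrow> bool) \<Rightarrow> (nat \<Rightarrow> real) \<Rightarrow> mat" where
  "padded_incident nv ne inc w = (\<lambda>i j.
     if 2 \<le> i \<and> i \<le> nv + 1 \<and> 2 \<le> j \<and> j \<le> ne + 1 \<and> inc (i - 1) (j - 1)
     then w (j - 1) else 0)"

definition scalar_col :: "nat \<Rightarrow> mat \<Rightarrow> nat \<Rightarrow> bool" where
  "scalar_col K X c = (\<forall>i\<in>{2..K}. X i c = 0)"

definition global_col :: "nat \<Rightarrow> mat \<Rightarrow> nat \<Rightarrow> bool" where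
  "global_col K X c = (X 1 c = 1 \<and> (\<forall>i\<in>{2..K}. X i c = 0))"

definition local_col :: "nat \<Rightarrow> mat \<Rightarrow> nat \<Rightarrow> bool" where
  "local_col K X c = (X 1 c = 0 \<and> (\<forall>i\<in>{2..K}. X i c = 1))"

end

theory Submission
  imports Defs
begin

text \<open>No attention head is needed. The MLP reads the operands through the ReLU unit
  \<open>max (x\<^sub>C + x\<^sub>D - x\<^sub>B\<^sub>g) 0\<close>, which on the top row (where \<open>x\<^sub>B\<^sub>g = 1\<close>) is
  \<open>x\<^sub>C \<and> x\<^sub>D\<close> for Boolean operands and on all other rows vanishes. The residual connection
  adds the input back, so the old contents of column \<open>E\<close> are cancelled using
  \<open>y = max y 0 - max (-y) 0\<close>; the two remaining hidden layers pass the nonnegative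
  activations through unchanged.\<close>

lemma sum_mult_idm:
  "c \<in> {1..n} \<Longrightarrow> (\<Sum>k=1..n. f k * idm k c) = (f c :: real)"
  by (simp add: idm_def if_distrib cong: if_cong)

lemma mmul_idm_right: "j \<in> {1..n} \<Longrightarrow> mmul n X idm i j = X i j"
  unfolding mmul_def by (rule sum_mult_idm)

lemma relu_nonneg: "relu Z i j \<ge> 0"
  by (simp add: relu_def)

lemma relu_mmul_idm_nonneg:
  "(\<And>i j. Z i j \<ge> 0) \<Longrightarrow> j \<in> {1..n} \<Longrightarrow> relu (mmul n Z idm) i j = Z i j"
  by (simp add: relu_def mmul_idm_right)

lemma f_attn_no_heads:
  assumes "headsA L = []" "headsAT L = []" "headsI L = []"
  shows "f_attn K d L X B = X"
  using assms by (simp add: f_attn_def)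

lemma apply_layer_single_hidden:
  assumes "headsA L = []" "headsAT L = []" "headsI L = []"
    and "hid1 L = n" "hid2 L = n" "hid3 L = n" "W2 L = idm" "W3 L = idm"
  shows "apply_layer K d L X B i j
           = (\<Sum>k=1..n. relu (mmul d X (W1 L)) i k * W4 L k j) + X i j"
proof -
  let ?Z = "relu (mmul d X (W1 L))"
  have hidden: "relu (mmul n (relu (mmul n ?Z idm)) idm) i k = ?Z i k" if "k \<in> {1..n}" for k
    using that by (simp add: relu_mmul_idm_nonneg relu_nonneg)
  have "apply_layer K d L X B i j
          = (\<Sum>k=1..n. relu (mmul n (relu (mmul n ?Z idm)) idm) i k * W4 L k j) + X i j"
    using assms by (simp add: apply_layer_def f_attn_no_heads f_mlp_def madd_def mmul_def)
  also have "\<dots> = (\<Sum>k=1..n. ?Z i k * W4 L k j) + X i j"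
    using hidden by simp
  finally show ?thesis .
qed

definition and_layer :: "nat \<Rightarrow> nat \<Rightarrow> nat \<Rightarrow> nat \<Rightarrow> layer" where
  "and_layer C D E Bg = \<lparr> headsA = [], headsAT = [], headsI = [],
     hid1 = 3, hid2 = 3, hid3 = 3,
     W1 = (\<lambda>k j. if j = 1 then idm k C + idm k D - idm k Bg
                 else (if j = 2 then 1 else -1) * idm k E),
     W2 = idm, W3 = idm,
     W4 = (\<lambda>k j. (if k = 2 then -1 else 1) * idm j E) \<rparr>"

lemma sum_atLeastAtMost_1_3: "(\<Sum>k::nat=1..3. f k) = f 1 + f 2 + (f 3 :: real)"
  by (simp add: numeral_3_eq_3 numeral_2_eq_2 sum.atLeast_Suc_atMost)

lemma apply_and_layer:
  assumes "C \<in> {1..d}" "D \<in> {1..d}" "E \<in> {1..d}" "Bg \<in> {1..d}"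
  shows "apply_layer K d (and_layer C D E Bg) X B i j
           = (if j = E then max (X i C + X i D - X i Bg) 0 else X i j)"
proof -
  let ?Y = "mmul d X (W1 (and_layer C D E Bg))"
  have select: "(\<Sum>k=1..d. X i k * idm k c) = X i c" if "c \<in> {1..d}" for c
    using that by (rule sum_mult_idm)
  have hidden: "?Y i 1 = X i C + X i D - X i Bg" "?Y i 2 = X i E" "?Y i 3 = - X i E"
    using select[OF assms(1)] select[OF assms(2)] select[OF assms(3)] select[OF assms(4)]
    by (simp_all add: mmul_def and_layer_def algebra_simps sum.distrib sum_subtractf sum_negf)
  have "apply_layer K d (and_layer C D E Bg) X B i j
          = (\<Sum>k=1..3. relu ?Y i k * W4 (and_layer C D E Bg) k j) + X i j"
    by (rule apply_layer_single_hidden) (simp_all add: and_layer_def)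
  also have "\<dots> = (max (X i C + X i D - X i Bg) 0 - max (X i E) 0 + max (- X i E) 0) * idm j E
            + X i j"
    unfolding sum_atLeastAtMost_1_3 relu_def hidden by (simp add: and_layer_def algebra_simps)
  also have "\<dots> = (if j = E then max (X i C + X i D - X i Bg) 0 else X i j)"
    by (simp add: idm_def max_def)
  finally show ?thesis .
qed

theorem lemmaC8:
  fixes \<Omega> :: real and K d C D E Bg Bl :: nat
  assumes "\<Omega> > 0"
    and "C \<in> {1..d}" "D \<in> {1..d}" "E \<in> {1..d}" "Bg \<in> {1..d}" "Bl \<in> {1..d}"
  shows "\<exists>L :: layer. \<forall>(X :: mat) nv ne inc w.
           K \<ge> max nv ne + 1
           \<longrightarrow> (\<forall>i\<in>{1..K}. \<forall>j\<in>{1..d}. \<bar>X i j\<bar> \<le> \<Omega>)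
           \<longrightarrow> global_col K X Bg \<longrightarrow> local_col K X Bl
           \<longrightarrow> scalar_col K X C \<longrightarrow> scalar_col K X D \<longrightarrow> scalar_col K X E
           \<longrightarrow> X 1 C \<in> {0, 1} \<longrightarrow> X 1 D \<in> {0, 1}
           \<longrightarrow> (\<forall>i\<in>{1..K}. \<forall>j\<in>{1..d}.
                  apply_layer K d L X (padded_incident nv ne inc w) i j =
                  (if i = 1 \<and> j = E
                   then (if X 1 C = 1 \<and> X 1 D = 1 then 1 else 0)
                   else X i j))"
proof (intro exI[of _ "and_layer C D E Bg"] allI impI ballI)
  fix X :: mat and nv ne :: nat and inc w i j
  assume g: "global_col K X Bg" and sC: "scalar_col K X C" and sD: "scalar_col K X D"
    and sE: "scalar_col K X E" and c01: "X 1 C \<in> {0, 1}" and d01: "X 1 D \<in> {0, 1}"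
    and i: "i \<in> {1..K}"
  note layer = apply_and_layer[OF assms(2-5)]
  show "apply_layer K d (and_layer C D E Bg) X (padded_incident nv ne inc w) i j =
        (if i = 1 \<and> j = E then (if X 1 C = 1 \<and> X 1 D = 1 then 1 else 0) else X i j)"
  proof (cases "i = 1")
    case True
    then show ?thesis using layer g c01 d01 by (auto simp: global_col_def)
  next
    case False
    with i have "i \<in> {2..K}" by auto
    then show ?thesis using layer g sC sD sE False by (auto simp: global_col_def scalar_col_def)
  qed
qed

end
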